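(* Let $\mathbb{K}$ be a field of characteristic $0$, $R=\mathbb{K}[x_1,\dots,x_n]$, and $I\subset R$ a monomial ideal such that $A=R/I$ is a level Artinian graded algebra of socle degree $t$. Let $\ell=x_1+\dots+x_n$. Then for every integer $k<t/2$ the multiplication maps $\times\ell^{t-2k}:A_k\to A_{t-k}$ and $\times\ell:A_k\to A_{k+1}$ are injective.
   Context: $A=R/I$ is standard graded, $A=A_0\oplus A_1\oplus\dots\oplus A_t$ with $A_t\neq 0$ (Artinian). The socle of $A$ is $\{f\in A: af=0 \text{ for all } a\in A_1\}$; $A$ is level if its socle equals $A_t$, and then $t$ is the socle degree. *)

theory Defs
  imports Main
begin

text \<open>Monomials of R = K[x_1..x_n] are exponent vectors m :: nat => nat with m i = 0 for i >= n
  (variable x_(i+1) corresponds to index i).  A monomial ideal is determined by the set of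
  monomials it contains, an upward closed set.  The quotient A = R/I has as K-basis the
  standard monomials (those not in I); elements of A are coefficient functions supported on
  the standard monomials, with the multiplication induced from R (products landing in I vanish).\<close>

definition monomials :: "nat \<Rightarrow> (nat \<Rightarrow> nat) set" where
  "monomials n = {m. \<forall>i\<ge>n. m i = 0}"

definition mdeg :: "nat \<Rightarrow> (nat \<Rightarrow> nat) \<Rightarrow> nat" where
  "mdeg n m = (\<Sum>i<n. m i)"

definition madd :: "(nat \<Rightarrow> nat) \<Rightarrow> (nat \<Rightarrow> nat) \<Rightarrow> (nat \<Rightarrow> nat)" where
  "madd m m' = (\<lambda>i. m i + m' i)"

definition is_monomial_ideal :: "nat \<Rightarrow> (nat \<Rightarrow> nat) set \<Rightarrow> bool" where
  "is_monomial_ideal n I \<longleftrightarrow> I \<subseteq> monomials n \<and> (\<forall>m\<in>I. \<forall>m'\<in>monomials n. madd m m' \<in> I)"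

definition std :: "nat \<Rightarrow> (nat \<Rightarrow> nat) set \<Rightarrow> (nat \<Rightarrow> nat) set" where
  "std n I = monomials n - I"

text \<open>A = R/I is Artinian iff it is finite dimensional, i.e. finitely many standard monomials.\<close>
definition artinian_quot :: "nat \<Rightarrow> (nat \<Rightarrow> nat) set \<Rightarrow> bool" where
  "artinian_quot n I \<longleftrightarrow> finite (std n I)"

definition quot_elems :: "nat \<Rightarrow> (nat \<Rightarrow> nat) set \<Rightarrow> ((nat \<Rightarrow> nat) \<Rightarrow> 'a::field) set" where
  "quot_elems n I = {f. \<forall>m. m \<notin> std n I \<longrightarrow> f m = 0}"

definition quot_mult :: "nat \<Rightarrow> (nat \<Rightarrow> nat) set \<Rightarrow> ((nat \<Rightarrow> nat) \<Rightarrow> 'a::field)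
    \<Rightarrow> ((nat \<Rightarrow> nat) \<Rightarrow> 'a) \<Rightarrow> ((nat \<Rightarrow> nat) \<Rightarrow> 'a)" where
  "quot_mult n I f g = (\<lambda>m. if m \<in> std n I then
      (\<Sum>p\<in>std n I. \<Sum>q\<in>std n I. if madd p q = m then f p * g q else 0) else 0)"

definition quot_one :: "nat \<Rightarrow> (nat \<Rightarrow> nat) set \<Rightarrow> ((nat \<Rightarrow> nat) \<Rightarrow> 'a::field)" where
  "quot_one n I = (\<lambda>m. if m \<in> std n I \<and> m = (\<lambda>_. 0) then 1 else 0)"

fun quot_pow :: "nat \<Rightarrow> (nat \<Rightarrow> nat) set \<Rightarrow> ((nat \<Rightarrow> nat) \<Rightarrow> 'a::field) \<Rightarrow> nat
    \<Rightarrow> ((nat \<Rightarrow> nat) \<Rightarrow> 'a)" where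
  "quot_pow n I f 0 = quot_one n I"
| "quot_pow n I f (Suc k) = quot_mult n I f (quot_pow n I f k)"

definition graded_piece :: "nat \<Rightarrow> (nat \<Rightarrow> nat) set \<Rightarrow> nat \<Rightarrow> ((nat \<Rightarrow> nat) \<Rightarrow> 'a::field) set" where
  "graded_piece n I k = {f \<in> quot_elems n I. \<forall>m. mdeg n m \<noteq> k \<longrightarrow> f m = 0}"

definition socle :: "nat \<Rightarrow> (nat \<Rightarrow> nat) set \<Rightarrow> ((nat \<Rightarrow> nat) \<Rightarrow> 'a::field) set" where
  "socle n I = {f \<in> quot_elems n I. \<forall>a \<in> graded_piece n I 1. quot_mult n I a f = (\<lambda>_. 0)}"

definition top_degree :: "'a::field itself \<Rightarrow> nat \<Rightarrow> (nat \<Rightarrow> nat) set \<Rightarrow> nat \<Rightarrow> bool" where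
  "top_degree _ n I t \<longleftrightarrow> (graded_piece n I t :: ((nat \<Rightarrow> nat) \<Rightarrow> 'a) set) \<noteq> {\<lambda>_. 0}
      \<and> (\<forall>j>t. (graded_piece n I j :: ((nat \<Rightarrow> nat) \<Rightarrow> 'a) set) = {\<lambda>_. 0})"

definition level :: "'a::field itself \<Rightarrow> nat \<Rightarrow> (nat \<Rightarrow> nat) set \<Rightarrow> nat \<Rightarrow> bool" where
  "level _ n I t \<longleftrightarrow> (socle n I :: ((nat \<Rightarrow> nat) \<Rightarrow> 'a) set) = graded_piece n I t"

definition sum_vars :: "nat \<Rightarrow> (nat \<Rightarrow> nat) set \<Rightarrow> ((nat \<Rightarrow> nat) \<Rightarrow> 'a::field)" where
  "sum_vars n I = (\<lambda>m. if m \<in> std n I \<and> (\<exists>i<n. m = (\<lambda>j. if j = i then 1 else 0)) then 1 else 0)"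

end

(*
  Elements of A are coefficient functions on the standard monomials, and multiplication by
  \<ell> sends g to m \<mapsto> \<Sum>_{i : m_i > 0} g (m - e_i).  Since A is level, every standard monomial of
  degree k divides a standard monomial M of degree t: otherwise its indicator would be a socle
  element of degree < t.  The divisors of M span the quotient R/(x_1^(M_1+1), ..., x_n^(M_n+1))
  of A, and restricting coefficient functions to them commutes with multiplication by \<ell>.  On
  this monomial complete intersection, E = multiplication by \<ell> and the lowering operator
  (F g)(m) = \<Sum>_i (m_i + 1)(M_i - m_i) g (m + e_i) satisfy [E, F] = 2d - t in degree d, so in
  characteristic 0 the sl2 argument makes E^(t-2d) injective in degree d.  Hence an element of
  A_k killed by \<ell>^(t-2k) vanishes on the divisors of every such M, i.e. it is zero; \<ell> itself
  is injective on A_k because \<ell>^(t-2k) factors through it.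
*)
theory Submission
  imports Defs HOL.Vector_Spaces "HOL-Library.Function_Algebras"
begin

locale graded_sl2 = vector_space scale
  for scale :: "'a::field_char_0 \<Rightarrow> 'v::ab_group_add \<Rightarrow> 'v" (infixr \<open>*s\<close> 75) +
  fixes E F :: "'v \<Rightarrow> 'v" and homog :: "nat \<Rightarrow> 'v \<Rightarrow> bool" and t :: nat
  assumes E_add: "E (x + y) = E x + E y"
    and E_scale: "E (c *s x) = c *s E x"
    and F_0: "F 0 = 0"
    and homog_E: "homog d v \<Longrightarrow> homog (Suc d) (E v)"
    and homog_F: "homog (Suc d) v \<Longrightarrow> homog d (F v)"
    and F_homog_0: "homog 0 v \<Longrightarrow> F v = 0"
    and E_F_commutator: "homog d v \<Longrightarrow> E (F v) = F (E v) + (of_nat (2 * d) - of_nat t) *s v"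
begin

lemma E_0: "E 0 = 0"
  using E_add[of 0 0] by simp

lemma E_pow_0: "(E ^^ j) 0 = 0"
  by (induction j) (simp_all add: E_0)

lemma homog_E_pow: "homog d v \<Longrightarrow> homog (d + j) ((E ^^ j) v)"
  by (induction j) (simp_all add: homog_E)

lemma F_E_pow:
  assumes "homog d v"
  shows "F ((E ^^ Suc j) v) = (E ^^ Suc j) (F v)
    + (of_nat (Suc j) * (of_nat t - of_nat (2 * d) - of_nat j)) *s (E ^^ j) v"
proof (induction j)
  case 0
  show ?case using E_F_commutator[OF assms] by (simp add: algebra_simps)
next
  case (Suc j)
  let ?w = "(E ^^ Suc j) v"
  have "homog (d + Suc j) ?w" by (rule homog_E_pow[OF assms])
  then have "F (E ?w) = E (F ?w) - (of_nat (2 * (d + Suc j)) - of_nat t) *s ?w"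
    by (simp add: E_F_commutator)
  also have "E (F ?w) = (E ^^ Suc (Suc j)) (F v)
      + (of_nat (Suc j) * (of_nat t - of_nat (2 * d) - of_nat j)) *s ?w"
    using Suc.IH by (simp add: E_add E_scale)
  finally have "F (E ?w) = (E ^^ Suc (Suc j)) (F v)
      + (of_nat (Suc j) * (of_nat t - of_nat (2 * d) - of_nat j)
         - (of_nat (2 * (d + Suc j)) - of_nat t)) *s ?w"
    by (simp add: scale_left_diff_distrib)
  moreover have "of_nat (Suc j) * (of_nat t - of_nat (2 * d) - of_nat j)
      - (of_nat (2 * (d + Suc j)) - of_nat t)
      = (of_nat (Suc (Suc j)) * (of_nat t - of_nat (2 * d) - of_nat (Suc j)) :: 'a)"
    by (simp add: algebra_simps)
  ultimately show ?case by simp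
qed

lemma primitive_E_pow_eq_0:
  assumes "homog d v" and "F v = 0" and "r \<le> t - 2 * d" and "(E ^^ r) v = 0"
  shows "v = 0"
  using assms(3,4)
proof (induction r)
  case 0
  then show ?case by simp
next
  case (Suc r)
  define c :: 'a where "c = of_nat (Suc r) * (of_nat t - of_nat (2 * d) - of_nat r)"
  have c: "c *s (E ^^ r) v = 0"
    using F_E_pow[OF assms(1), of r] Suc.prems(2) by (simp add: c_def assms(2) E_pow_0 F_0 E_0)
  have "of_nat (t - 2 * d - r) = (of_nat t - of_nat (2 * d) - of_nat r :: 'a)"
    using Suc.prems(1) by (simp add: of_nat_diff)
  then have "c = of_nat (Suc r * (t - 2 * d - r))"
    by (simp only: c_def of_nat_mult)
  moreover have "Suc r * (t - 2 * d - r) \<noteq> 0"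
    using Suc.prems(1) by simp
  ultimately have "c \<noteq> 0"
    by (metis of_nat_eq_0_iff)
  with c have "(E ^^ r) v = 0" by simp
  then show ?case using Suc by simp
qed

theorem hard_lefschetz: "homog d v \<Longrightarrow> 2 * d < t \<Longrightarrow> (E ^^ (t - 2 * d)) v = 0 \<Longrightarrow> v = 0"
proof (induction d arbitrary: v)
  case 0
  then show ?case using primitive_E_pow_eq_0[of 0 v t] F_homog_0 by simp
next
  case (Suc d)
  txt \<open>\<open>F v\<close> has degree \<open>d\<close> and is killed by \<open>E ^^ (t - 2 * d)\<close>, so it vanishes by induction;
    then \<open>v\<close> is primitive.\<close>
  define r where "r = t - 2 * Suc d"
  have "(E ^^ Suc r) v = 0" "(E ^^ Suc (Suc r)) v = 0"
    using Suc.prems(3) by (simp_all add: r_def E_0)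
  then have "(E ^^ Suc (Suc r)) (F v) = 0"
    using F_E_pow[OF Suc.prems(1), of "Suc r"] by (simp add: F_0)
  moreover have "Suc (Suc r) = t - 2 * d"
    using Suc.prems(2) by (simp add: r_def)
  ultimately have "F v = 0"
    using Suc.IH homog_F Suc.prems by auto
  then show ?case
    using primitive_E_pow_eq_0[of "Suc d" v r] Suc.prems by (simp add: r_def)
qed

end

definition zero_outside :: "'b set \<Rightarrow> ('b \<Rightarrow> 'a::zero) \<Rightarrow> 'b \<Rightarrow> 'a" where
  "zero_outside S g = (\<lambda>m. if m \<in> S then g m else 0)"

definition mult_var :: "nat \<Rightarrow> ((nat \<Rightarrow> nat) \<Rightarrow> 'a::zero) \<Rightarrow> (nat \<Rightarrow> nat) \<Rightarrow> 'a" where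
  "mult_var i g = (\<lambda>m. if 0 < m i then g (m(i := m i - 1)) else 0)"

text \<open>Multiplication by \<open>\<ell>\<close> truncated to \<open>S\<close>: for \<open>S = std n I\<close> this is multiplication in \<open>A\<close>,
  for \<open>S = {..M}\<close> multiplication in \<open>R/(x\<^sub>1^(M\<^sub>1+1), ..., x\<^sub>n^(M\<^sub>n+1))\<close>.\<close>

definition ell_mult :: "nat \<Rightarrow> (nat \<Rightarrow> nat) set \<Rightarrow> ((nat \<Rightarrow> nat) \<Rightarrow> 'a::comm_monoid_add)
    \<Rightarrow> (nat \<Rightarrow> nat) \<Rightarrow> 'a" where
  "ell_mult n S g = zero_outside S (\<lambda>m. \<Sum>i<n. mult_var i g m)"

text \<open>The weight \<open>(m\<^sub>i + 1)(M\<^sub>i - m\<^sub>i)\<close> is the one for which the commutator with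
  multiplication by \<open>x\<^sub>i\<close> is \<open>2 m\<^sub>i - M\<^sub>i\<close>, as in the standard
  sl2-action on \<open>K[x\<^sub>i]/(x\<^sub>i^(M\<^sub>i+1))\<close>.\<close>

definition lower_var :: "(nat \<Rightarrow> nat) \<Rightarrow> nat \<Rightarrow> ((nat \<Rightarrow> nat) \<Rightarrow> 'a::semiring_1)
    \<Rightarrow> (nat \<Rightarrow> nat) \<Rightarrow> 'a" where
  "lower_var M i g = (\<lambda>m. of_nat ((m i + 1) * (M i - m i)) * g (m(i := m i + 1)))"

definition box_lower :: "nat \<Rightarrow> (nat \<Rightarrow> nat) \<Rightarrow> ((nat \<Rightarrow> nat) \<Rightarrow> 'a::semiring_1)
    \<Rightarrow> (nat \<Rightarrow> nat) \<Rightarrow> 'a" where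
  "box_lower n M g = zero_outside {..M} (\<lambda>m. \<Sum>i<n. lower_var M i g m)"

definition box_homog :: "nat \<Rightarrow> (nat \<Rightarrow> nat) \<Rightarrow> nat \<Rightarrow> ((nat \<Rightarrow> nat) \<Rightarrow> 'a::zero) \<Rightarrow> bool" where
  "box_homog n M d g \<longleftrightarrow> (\<forall>m. g m \<noteq> 0 \<longrightarrow> m \<le> M \<and> mdeg n m = d)"

lemma ell_mult_apply: "m \<in> S \<Longrightarrow> ell_mult n S g m = (\<Sum>i<n. mult_var i g m)"
  by (simp add: ell_mult_def zero_outside_def)

lemma box_lower_apply: "m \<le> M \<Longrightarrow> box_lower n M g m = (\<Sum>i<n. lower_var M i g m)"
  by (simp add: box_lower_def zero_outside_def)

lemma mdeg_fun_upd: "i < n \<Longrightarrow> mdeg n (m(i := x)) + m i = mdeg n m + x"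
  by (simp add: mdeg_def sum.remove[of "{..<n}" i] algebra_simps)

lemma mult_var_zero_outside:
  assumes "{..m} \<subseteq> S"
  shows "mult_var i (zero_outside S g) m = mult_var i g m"
proof -
  have "m(i := m i - 1) \<in> S"
    using assms by (auto simp: le_fun_def)
  then show ?thesis
    by (simp add: mult_var_def zero_outside_def)
qed

lemma mult_var_sum: "mult_var i (\<lambda>m. \<Sum>j\<in>J. h j m) m = (\<Sum>j\<in>J. mult_var i (h j) m)"
  by (simp add: mult_var_def)

lemma lower_var_sum: "lower_var M i (\<lambda>m. \<Sum>j\<in>J. h j m) m = (\<Sum>j\<in>J. lower_var M i (h j) m)"
  by (simp add: lower_var_def sum_distrib_left)

lemma lower_var_zero_outside_box:
  "m \<le> M \<Longrightarrow> lower_var M i (zero_outside {..M} g) m = lower_var M i g m"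
  by (cases "m i < M i") (auto simp: lower_var_def zero_outside_def le_fun_def)

lemma mult_var_lower_var_commute:
  "i \<noteq> j \<Longrightarrow> mult_var i (lower_var M j g) = lower_var M j (mult_var i g)"
  by (auto simp: mult_var_def lower_var_def fun_upd_twist fun_eq_iff)

lemma mult_var_lower_var_same:
  fixes g :: "(nat \<Rightarrow> nat) \<Rightarrow> 'a::comm_ring_1"
  assumes "m i \<le> M i"
  shows "mult_var i (lower_var M i g) m
    = lower_var M i (mult_var i g) m + (of_nat (2 * m i) - of_nat (M i)) * g m"
proof -
  obtain b where M: "M i = m i + b" using assms le_Suc_ex by blast
  have "mult_var i (lower_var M i g) m = of_nat (m i * (b + 1)) * g m"
    by (cases "m i") (simp_all add: mult_var_def lower_var_def M fun_upd_idem algebra_simps)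
  moreover have "lower_var M i (mult_var i g) m = of_nat ((m i + 1) * b) * g m"
    by (simp add: mult_var_def lower_var_def M)
  ultimately show ?thesis
    by (simp add: M algebra_simps)
qed

lemma mult_var_add:
  fixes g :: "(nat \<Rightarrow> nat) \<Rightarrow> 'a::monoid_add"
  shows "mult_var i (g + h) m = mult_var i g m + mult_var i h m"
  by (simp add: mult_var_def)

lemma mult_var_diff:
  fixes g :: "(nat \<Rightarrow> nat) \<Rightarrow> 'a::group_add"
  shows "mult_var i (g - h) m = mult_var i g m - mult_var i h m"
  by (simp add: mult_var_def)

lemma mult_var_scale:
  fixes g :: "(nat \<Rightarrow> nat) \<Rightarrow> 'a::mult_zero"
  shows "mult_var i (\<lambda>m. c * g m) m = c * mult_var i g m"
  by (simp add: mult_var_def)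

lemma ell_mult_add: "ell_mult n S (g + h) = ell_mult n S g + ell_mult n S h"
  by (simp add: ell_mult_def zero_outside_def mult_var_add sum.distrib fun_eq_iff)

lemma ell_mult_diff:
  fixes g :: "(nat \<Rightarrow> nat) \<Rightarrow> 'a::ab_group_add"
  shows "ell_mult n S (g - h) = ell_mult n S g - ell_mult n S h"
  by (simp add: ell_mult_def zero_outside_def mult_var_diff sum_subtractf fun_eq_iff)

lemma ell_mult_pow_diff:
  fixes g :: "(nat \<Rightarrow> nat) \<Rightarrow> 'a::ab_group_add"
  shows "(ell_mult n S ^^ r) (g - h) = (ell_mult n S ^^ r) g - (ell_mult n S ^^ r) h"
  by (induction r) (simp_all only: funpow.simps id_apply comp_apply ell_mult_diff)

lemma ell_mult_scale:
  fixes g :: "(nat \<Rightarrow> nat) \<Rightarrow> 'a::comm_semiring_1"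
  shows "ell_mult n S (\<lambda>m. c * g m) = (\<lambda>m. c * ell_mult n S g m)"
  by (simp add: ell_mult_def zero_outside_def mult_var_scale sum_distrib_left fun_eq_iff)

lemma ell_mult_nonzero:
  assumes "ell_mult n S g m \<noteq> 0"
  obtains i where "m \<in> S" "i < n" "0 < m i" "g (m(i := m i - 1)) \<noteq> 0"
proof -
  have "m \<in> S" "(\<Sum>i<n. mult_var i g m) \<noteq> 0"
    using assms by (auto simp: ell_mult_def zero_outside_def split: if_splits)
  then obtain i where "i < n" "mult_var i g m \<noteq> 0"
    by (meson lessThan_iff sum.neutral)
  then show ?thesis
    using that \<open>m \<in> S\<close> by (auto simp: mult_var_def split: if_splits)
qed

lemma box_lower_nonzero:
  assumes "box_lower n M g m \<noteq> 0"
  obtains i where "m \<le> M" "i < n" "g (m(i := m i + 1)) \<noteq> 0"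
proof -
  have "m \<le> M" "(\<Sum>i<n. lower_var M i g m) \<noteq> 0"
    using assms by (auto simp: box_lower_def zero_outside_def split: if_splits)
  then obtain i where "i < n" "lower_var M i g m \<noteq> 0"
    by (meson lessThan_iff sum.neutral)
  moreover from this have "g (m(i := m i + 1)) \<noteq> 0"
    by (auto simp: lower_var_def)
  ultimately show ?thesis
    using that \<open>m \<le> M\<close> by blast
qed

lemma box_homog_ell_mult:
  assumes "box_homog n M d g"
  shows "box_homog n M (Suc d) (ell_mult n {..M} g)"
  unfolding box_homog_def
proof (intro allI impI)
  fix m assume "ell_mult n {..M} g m \<noteq> 0"
  then obtain i where i: "m \<le> M" "i < n" "0 < m i" "g (m(i := m i - 1)) \<noteq> 0"
    by (metis ell_mult_nonzero atMost_iff)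
  then have "mdeg n (m(i := m i - 1)) = d"
    using assms by (simp add: box_homog_def)
  then show "m \<le> M \<and> mdeg n m = Suc d"
    using i mdeg_fun_upd[of i n m "m i - 1"] by simp
qed

lemma box_homog_box_lower_deg:
  assumes "box_homog n M d g" and "box_lower n M g m \<noteq> 0"
  shows "m \<le> M \<and> Suc (mdeg n m) = d"
proof -
  obtain i where i: "m \<le> M" "i < n" "g (m(i := m i + 1)) \<noteq> 0"
    using assms(2) by (rule box_lower_nonzero)
  then have "mdeg n (m(i := m i + 1)) = d"
    using assms(1) by (simp add: box_homog_def)
  then show ?thesis
    using i mdeg_fun_upd[of i n m "m i + 1"] by simp
qed

lemma box_homog_box_lower:
  assumes "box_homog n M (Suc d) g"
  shows "box_homog n M d (box_lower n M g)"
  unfolding box_homog_def using box_homog_box_lower_deg[OF assms] by simp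

lemma box_lower_box_homog_0:
  assumes "box_homog n M 0 g"
  shows "box_lower n M g = 0"
  using box_homog_box_lower_deg[OF assms] by (auto simp: fun_eq_iff)

lemma ell_mult_box_lower_apply:
  assumes "m \<le> M"
  shows "ell_mult n {..M} (box_lower n M g) m = (\<Sum>i<n. \<Sum>j<n. mult_var i (lower_var M j g) m)"
proof -
  have "{..m} \<subseteq> {..M}"
    using assms by auto
  with assms show ?thesis
    by (simp add: ell_mult_apply box_lower_def mult_var_zero_outside mult_var_sum)
qed

lemma box_lower_ell_mult_apply:
  assumes "m \<le> M"
  shows "box_lower n M (ell_mult n {..M} g) m = (\<Sum>i<n. \<Sum>j<n. lower_var M j (mult_var i g) m)"
proof -
  have "box_lower n M (ell_mult n {..M} g) m = (\<Sum>j<n. lower_var M j (\<lambda>m. \<Sum>i<n. mult_var i g m) m)"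
    using assms unfolding box_lower_apply[OF assms] ell_mult_def by (simp only: lower_var_zero_outside_box)
  also have "\<dots> = (\<Sum>j<n. \<Sum>i<n. lower_var M j (mult_var i g) m)"
    by (simp only: lower_var_sum)
  also have "\<dots> = (\<Sum>i<n. \<Sum>j<n. lower_var M j (mult_var i g) m)"
    by (rule sum.swap)
  finally show ?thesis .
qed

lemma box_commutator_apply:
  fixes g :: "(nat \<Rightarrow> nat) \<Rightarrow> 'a::comm_ring_1"
  assumes "m \<le> M"
  shows "ell_mult n {..M} (box_lower n M g) m
    = box_lower n M (ell_mult n {..M} g) m + (of_nat (2 * mdeg n m) - of_nat (mdeg n M)) * g m"
proof -
  have "ell_mult n {..M} (box_lower n M g) m = (\<Sum>i<n. \<Sum>j<n. lower_var M j (mult_var i g) m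
      + (if j = i then (of_nat (2 * m i) - of_nat (M i)) * g m else 0))"
    unfolding ell_mult_box_lower_apply[OF assms] using assms
    by (intro sum.cong refl) (auto simp: mult_var_lower_var_commute mult_var_lower_var_same le_fun_def)
  also have "\<dots> = box_lower n M (ell_mult n {..M} g) m + (\<Sum>i<n. of_nat (2 * m i) - of_nat (M i)) * g m"
    by (simp add: box_lower_ell_mult_apply[OF assms] sum.distrib sum_distrib_right)
  also have "(\<Sum>i<n. of_nat (2 * m i) - of_nat (M i)) = (of_nat (2 * mdeg n m) - of_nat (mdeg n M) :: 'a)"
    by (simp add: mdeg_def sum_subtractf sum_distrib_left)
  finally show ?thesis .
qed

lemma box_commutator:
  fixes g :: "(nat \<Rightarrow> nat) \<Rightarrow> 'a::comm_ring_1"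
  assumes "box_homog n M d g"
  shows "ell_mult n {..M} (box_lower n M g)
    = box_lower n M (ell_mult n {..M} g) + (\<lambda>m. (of_nat (2 * d) - of_nat (mdeg n M)) * g m)"
proof
  fix m
  show "ell_mult n {..M} (box_lower n M g) m
    = (box_lower n M (ell_mult n {..M} g) + (\<lambda>m. (of_nat (2 * d) - of_nat (mdeg n M)) * g m)) m"
  proof (cases "m \<le> M")
    case True
    then show ?thesis
      using assms by (cases "g m = 0") (simp_all add: box_commutator_apply box_homog_def)
  next
    case False
    then have "g m = 0"
      using assms by (auto simp: box_homog_def)
    with False show ?thesis
      by (simp add: ell_mult_def box_lower_def zero_outside_def)
  qed
qed

lemma graded_sl2_box:
  "graded_sl2 (\<lambda>c (g :: (nat \<Rightarrow> nat) \<Rightarrow> 'a::field_char_0) m. c * g m)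
     (ell_mult n {..M}) (box_lower n M) (box_homog n M) (mdeg n M)"
proof (intro graded_sl2.intro graded_sl2_axioms.intro)
  show "vector_space (\<lambda>c (g :: (nat \<Rightarrow> nat) \<Rightarrow> 'a) m. c * g m)"
    by unfold_locales (simp_all add: fun_eq_iff algebra_simps)
  show "box_lower n M 0 = (0 :: (nat \<Rightarrow> nat) \<Rightarrow> 'a)"
    by (simp add: box_lower_def zero_outside_def lower_var_def fun_eq_iff)
qed (simp_all add: ell_mult_add ell_mult_scale box_homog_ell_mult box_homog_box_lower
       box_lower_box_homog_0 box_commutator)

lemma zero_outside_ell_mult:
  assumes "{..M} \<subseteq> S"
  shows "zero_outside {..M} (ell_mult n S g) = ell_mult n {..M} (zero_outside {..M} g)"
proof
  fix m
  show "zero_outside {..M} (ell_mult n S g) m = ell_mult n {..M} (zero_outside {..M} g) m"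
  proof (cases "m \<le> M")
    case True
    then have "{..m} \<subseteq> {..M}" "m \<in> S"
      using assms by auto
    then have "zero_outside {..M} (ell_mult n S g) m = (\<Sum>i<n. mult_var i (zero_outside {..M} g) m)"
      using True by (simp add: zero_outside_def[of "{..M}" "ell_mult n S g"] ell_mult_apply
          mult_var_zero_outside)
    with True show ?thesis
      by (simp add: ell_mult_apply)
  qed (simp add: zero_outside_def ell_mult_def)
qed

lemma zero_outside_ell_mult_pow:
  "{..M} \<subseteq> S \<Longrightarrow> zero_outside {..M} ((ell_mult n S ^^ r) g) = (ell_mult n {..M} ^^ r) (zero_outside {..M} g)"
  by (induction r) (simp_all add: zero_outside_ell_mult)

lemma madd_eq_iff: "madd p q = m \<longleftrightarrow> q \<le> m \<and> p = m - q"
  unfolding madd_def le_fun_def fun_eq_iff fun_diff_def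
  by (metis add_diff_cancel_right' le_add2 le_add_diff_inverse2)

lemma mdeg_madd: "mdeg n (madd u m) = mdeg n u + mdeg n m"
  by (simp add: mdeg_def madd_def sum.distrib)

lemma atMost_subset_std:
  assumes I: "is_monomial_ideal n I" and m: "m \<in> std n I"
  shows "{..m} \<subseteq> std n I"
proof
  fix p assume "p \<in> {..m}"
  then have "p \<le> m" by simp
  have "m \<in> monomials n" "m \<notin> I"
    using m by (auto simp: std_def)
  have le: "p i \<le> m i" for i
    using \<open>p \<le> m\<close> by (simp add: le_fun_def)
  have "m i = 0" if "n \<le> i" for i
    using \<open>m \<in> monomials n\<close> that by (simp add: monomials_def)
  with le have "p \<in> monomials n" "m - p \<in> monomials n"
    by (auto simp: monomials_def) (metis le_zero_eq)
  moreover have "p \<notin> I"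
  proof
    assume "p \<in> I"
    then have "madd p (m - p) \<in> I"
      using I \<open>m - p \<in> monomials n\<close> by (simp add: is_monomial_ideal_def)
    moreover have "madd p (m - p) = m"
      using le by (simp add: madd_def fun_eq_iff)
    ultimately show False
      using \<open>m \<notin> I\<close> by simp
  qed
  ultimately show "p \<in> std n I"
    by (simp add: std_def)
qed

lemma quot_mult_apply:
  assumes I: "is_monomial_ideal n I" and fin: "finite (std n I)" and m: "m \<in> std n I"
  shows "quot_mult n I f g m = (\<Sum>q\<in>{..m}. f (m - q) * g q)"
proof -
  have sub: "{..m} \<subseteq> std n I"
    using I m by (rule atMost_subset_std)
  have "quot_mult n I f g m
      = (\<Sum>p\<in>std n I. \<Sum>q\<in>std n I. if madd p q = m then f p * g q else 0)"
    using m by (simp add: quot_mult_def)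
  also have "\<dots> = (\<Sum>q\<in>std n I. \<Sum>p\<in>std n I. if madd p q = m then f p * g q else 0)"
    by (rule sum.swap)
  also have "\<dots> = (\<Sum>q\<in>std n I. if q \<le> m then f (m - q) * g q else 0)"
  proof (rule sum.cong[OF refl])
    fix q
    have "q \<le> m \<Longrightarrow> m - q \<in> std n I"
      using sub by (auto simp: le_fun_def)
    then show "(\<Sum>p\<in>std n I. if madd p q = m then f p * g q else 0)
        = (if q \<le> m then f (m - q) * g q else 0)"
      using fin by (auto simp: madd_eq_iff sum.delta')
  qed
  also have "\<dots> = (\<Sum>q\<in>{q \<in> std n I. q \<le> m}. f (m - q) * g q)"
    using fin by (simp add: sum.inter_filter)
  also have "{q \<in> std n I. q \<le> m} = {..m}"
    using sub by auto
  finally show ?thesis .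
qed

lemma quot_mult_one_left:
  assumes I: "is_monomial_ideal n I" and fin: "finite (std n I)" and m: "m \<in> std n I"
  shows "quot_mult n I (quot_one n I) g m = g m"
proof -
  have sub: "{..m} \<subseteq> std n I"
    using I m by (rule atMost_subset_std)
  have one: "quot_one n I (m - q) = (if q = m then 1 else 0)" if "q \<le> m" for q
  proof -
    have "m - q = (\<lambda>_. 0) \<longleftrightarrow> q = m"
      using that by (auto simp: le_fun_def fun_eq_iff intro: antisym)
    moreover have "(\<lambda>_. 0) \<in> std n I"
      using sub by (auto simp: le_fun_def)
    ultimately show ?thesis
      by (auto simp: quot_one_def)
  qed
  have "quot_mult n I (quot_one n I) g m = (\<Sum>q\<in>{..m}. quot_one n I (m - q) * g q)"
    using I fin m by (rule quot_mult_apply)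
  also have "\<dots> = (\<Sum>q\<in>{..m}. if q = m then g q else 0)"
    by (rule sum.cong) (simp_all add: one)
  also have "\<dots> = g m"
    using fin sub by (simp add: finite_subset)
  finally show ?thesis .
qed

lemma quot_mult_mult_var_left:
  assumes I: "is_monomial_ideal n I" and fin: "finite (std n I)" and m: "m \<in> std n I"
  shows "quot_mult n I (mult_var i g) f m = mult_var i (quot_mult n I g f) m"
proof (cases "0 < m i")
  case False
  then show ?thesis
    using I fin m by (simp add: quot_mult_apply mult_var_def)
next
  case True
  define m' where "m' = m(i := m i - 1)"
  have "m' \<le> m"
    by (simp add: m'_def le_fun_def)
  then have "m' \<in> std n I"
    using atMost_subset_std[OF I m] by auto
  have shift: "mult_var i g (m - q) = (if q \<le> m' then g (m' - q) else 0)" if "q \<le> m" for q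
    using that True by (auto simp: mult_var_def m'_def le_fun_def fun_eq_iff intro!: arg_cong[where f = g])
  have "quot_mult n I (mult_var i g) f m = (\<Sum>q\<in>{..m}. mult_var i g (m - q) * f q)"
    using I fin m by (rule quot_mult_apply)
  also have "\<dots> = (\<Sum>q\<in>{..m}. if q \<le> m' then g (m' - q) * f q else 0)"
    by (rule sum.cong) (simp_all add: shift)
  also have "\<dots> = (\<Sum>q\<in>{q \<in> {..m}. q \<le> m'}. g (m' - q) * f q)"
    using finite_subset[OF atMost_subset_std[OF I m] fin] by (rule sum.inter_filter[symmetric])
  also have "{q \<in> {..m}. q \<le> m'} = {..m'}"
    using \<open>m' \<le> m\<close> by (auto intro: order_trans)
  also have "(\<Sum>q\<in>{..m'}. g (m' - q) * f q) = quot_mult n I g f m'"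
    using I fin \<open>m' \<in> std n I\<close> by (simp add: quot_mult_apply)
  finally show ?thesis
    using True by (simp add: mult_var_def m'_def)
qed

lemma ell_mult_cong:
  assumes "\<And>m. m \<in> S \<Longrightarrow> {..m} \<subseteq> S" and "\<And>p. p \<in> S \<Longrightarrow> g p = h p"
  shows "ell_mult n S g = ell_mult n S h"
proof
  fix m
  have "zero_outside S g = zero_outside S h"
    using assms(2) by (simp add: zero_outside_def fun_eq_iff)
  then have "m \<in> S \<Longrightarrow> mult_var i g m = mult_var i h m" for i
    using assms(1) by (metis mult_var_zero_outside)
  then show "ell_mult n S g m = ell_mult n S h m"
    by (simp add: ell_mult_def zero_outside_def)
qed

lemma quot_mult_ell_mult_left:
  assumes I: "is_monomial_ideal n I" and fin: "finite (std n I)"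
  shows "quot_mult n I (ell_mult n (std n I) g) f = ell_mult n (std n I) (quot_mult n I g f)"
proof
  fix m
  show "quot_mult n I (ell_mult n (std n I) g) f m = ell_mult n (std n I) (quot_mult n I g f) m"
  proof (cases "m \<in> std n I")
    case False
    then show ?thesis
      by (simp add: quot_mult_def ell_mult_def zero_outside_def)
  next
    case True
    have "m - q \<in> std n I" if "q \<le> m" for q
      using atMost_subset_std[OF I True] by (auto simp: le_fun_def)
    then have "quot_mult n I (ell_mult n (std n I) g) f m
        = (\<Sum>q\<in>{..m}. (\<Sum>i<n. mult_var i g (m - q)) * f q)"
      using I fin True by (simp add: quot_mult_apply ell_mult_apply)
    also have "\<dots> = (\<Sum>i<n. quot_mult n I (mult_var i g) f m)"
      using I fin True by (simp add: quot_mult_apply sum_distrib_right sum.swap[of _ "{..<n}"])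
    also have "\<dots> = ell_mult n (std n I) (quot_mult n I g f) m"
      using I fin True by (simp add: quot_mult_mult_var_left ell_mult_apply)
    finally show ?thesis .
  qed
qed

lemma sum_vars_eq_ell_mult_one:
  assumes I: "is_monomial_ideal n I"
  shows "(sum_vars n I :: (nat \<Rightarrow> nat) \<Rightarrow> 'a::field) = ell_mult n (std n I) (quot_one n I)"
proof
  fix m
  show "(sum_vars n I :: (nat \<Rightarrow> nat) \<Rightarrow> 'a) m = ell_mult n (std n I) (quot_one n I) m"
  proof (cases "m \<in> std n I")
    case False
    then show ?thesis
      by (simp add: sum_vars_def ell_mult_def zero_outside_def)
  next
    case True
    let ?e = "\<lambda>i j. if j = i then 1 else 0 :: nat"
    have mult_var_one: "mult_var i (quot_one n I) m = (if m = ?e i then 1 else 0 :: 'a)" for i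
    proof -
      have "m(i := m i - 1) \<in> std n I"
        using atMost_subset_std[OF I True] by (auto simp: le_fun_def)
      moreover have "0 < m i \<and> m(i := m i - 1) = (\<lambda>_. 0) \<longleftrightarrow> m = ?e i"
        by (auto simp: fun_eq_iff split: if_splits)
      ultimately show ?thesis
        by (auto simp: mult_var_def quot_one_def)
    qed
    have "ell_mult n (std n I) (quot_one n I) m = (\<Sum>i<n. if m = ?e i then 1 else (0::'a))"
      using True by (simp add: ell_mult_apply mult_var_one)
    also have "\<dots> = (if \<exists>i<n. m = ?e i then 1 else (0::'a))"
    proof (cases "\<exists>i<n. m = ?e i")
      case True
      then obtain j where "j < n" "m = ?e j" by blast
      moreover have "?e j = ?e i \<longleftrightarrow> i = j" for i
        by (auto simp: fun_eq_iff)
      ultimately show ?thesis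
        by simp
    qed simp
    finally show ?thesis
      using True by (simp add: sum_vars_def)
  qed
qed

lemma quot_mult_sum_vars:
  assumes I: "is_monomial_ideal n I" and fin: "finite (std n I)"
  shows "quot_mult n I (sum_vars n I) = ell_mult n (std n I)"
proof
  fix g
  have "quot_mult n I (sum_vars n I) g = ell_mult n (std n I) (quot_mult n I (quot_one n I) g)"
    using I fin by (simp add: sum_vars_eq_ell_mult_one quot_mult_ell_mult_left)
  also have "\<dots> = ell_mult n (std n I) g"
    using I fin by (intro ell_mult_cong) (simp_all add: atMost_subset_std quot_mult_one_left)
  finally show "quot_mult n I (sum_vars n I) g = ell_mult n (std n I) g" .
qed

lemma quot_mult_pow_sum_vars:
  assumes I: "is_monomial_ideal n I" and fin: "finite (std n I)" and f: "f \<in> quot_elems n I"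
  shows "quot_mult n I (quot_pow n I (sum_vars n I) r) f = (ell_mult n (std n I) ^^ r) f"
proof (induction r)
  case 0
  have "quot_mult n I (quot_one n I) f m = f m" for m
  proof (cases "m \<in> std n I")
    case True
    then show ?thesis by (rule quot_mult_one_left[OF I fin])
  next
    case False
    then show ?thesis using f by (simp add: quot_mult_def quot_elems_def)
  qed
  then show ?case by (simp add: fun_eq_iff)
next
  case (Suc r)
  then show ?case
    using I fin by (simp add: quot_mult_sum_vars quot_mult_ell_mult_left)
qed

lemma level_std_extend:
  assumes lev: "level TYPE('a::field) n I t" and m: "m \<in> std n I" and "mdeg n m < t"
  shows "\<exists>m'\<in>std n I. m \<le> m' \<and> mdeg n m' = Suc (mdeg n m)"
proof (rule ccontr)
  assume no_ext: "\<not> ?thesis"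
  define \<delta> :: "(nat \<Rightarrow> nat) \<Rightarrow> 'a" where "\<delta> = (\<lambda>p. if p = m then 1 else 0)"
  have "\<delta> \<in> socle n I"
    unfolding socle_def
  proof (intro CollectI conjI ballI)
    show "\<delta> \<in> quot_elems n I"
      using m by (simp add: \<delta>_def quot_elems_def)
    fix a :: "(nat \<Rightarrow> nat) \<Rightarrow> 'a" assume a: "a \<in> graded_piece n I 1"
    have a0: "a u = 0" if "u \<in> std n I" and "madd u m \<in> std n I" for u
    proof (rule ccontr)
      assume "a u \<noteq> 0"
      then have "mdeg n u = 1"
        using a by (auto simp: graded_piece_def)
      moreover have "m \<le> madd u m"
        by (simp add: madd_def le_fun_def)
      ultimately show False
        using no_ext that by (auto simp: mdeg_madd)
    qed
    have "(if madd u q = p then a u * \<delta> q else 0) = 0" if "p \<in> std n I" "u \<in> std n I" for p u q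
      using that a0 by (auto simp: \<delta>_def)
    then show "quot_mult n I a \<delta> = (\<lambda>_. 0)"
      by (simp add: quot_mult_def fun_eq_iff)
  qed
  then have "\<delta> \<in> graded_piece n I t"
    using lev by (simp add: level_def)
  then have "mdeg n m = t"
    by (auto simp: graded_piece_def \<delta>_def split: if_splits)
  with \<open>mdeg n m < t\<close> show False by simp
qed

lemma level_std_below_top:
  assumes lev: "level TYPE('a::field) n I t"
  shows "m \<in> std n I \<Longrightarrow> mdeg n m \<le> t \<Longrightarrow> \<exists>M\<in>std n I. mdeg n M = t \<and> m \<le> M"
proof (induction "t - mdeg n m" arbitrary: m)
  case 0
  then show ?case by auto
next
  case (Suc j)
  then have "mdeg n m < t" by simp
  then obtain m' where m': "m' \<in> std n I" "m \<le> m'" "mdeg n m' = Suc (mdeg n m)"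
    using level_std_extend[OF lev Suc.prems(1)] by blast
  moreover have "j = t - mdeg n m'" "mdeg n m' \<le> t"
    using Suc.hyps(2) m'(3) by simp_all
  ultimately obtain M where "M \<in> std n I" "mdeg n M = t" "m' \<le> M"
    using Suc.hyps(1) by blast
  with m' show ?case
    by (auto intro: order_trans)
qed

lemma ell_mult_pow_eq_0_imp_eq_0:
  fixes g :: "(nat \<Rightarrow> nat) \<Rightarrow> 'a::field_char_0"
  assumes I: "is_monomial_ideal n I" and lev: "level TYPE('a) n I t" and "2 * k < t"
    and g: "g \<in> graded_piece n I k" and Lg: "(ell_mult n (std n I) ^^ (t - 2 * k)) g = 0"
  shows "g = 0"
proof
  fix m
  show "g m = 0 m"
  proof (rule ccontr)
    assume "g m \<noteq> 0 m"
    then have m: "m \<in> std n I" "mdeg n m = k"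
      using g by (auto simp: graded_piece_def quot_elems_def)
    moreover have "mdeg n m \<le> t"
      using m(2) \<open>2 * k < t\<close> by simp
    ultimately obtain M where M: "M \<in> std n I" "mdeg n M = t" "m \<le> M"
      using level_std_below_top[OF lev] by blast
    interpret box: graded_sl2 "\<lambda>c (g :: (nat \<Rightarrow> nat) \<Rightarrow> 'a) m. c * g m"
        "ell_mult n {..M}" "box_lower n M" "box_homog n M" "mdeg n M"
      by (rule graded_sl2_box)
    have homog: "box_homog n M k (zero_outside {..M} g)"
      using g by (auto simp: box_homog_def zero_outside_def graded_piece_def)
    have "(ell_mult n {..M} ^^ (t - 2 * k)) (zero_outside {..M} g)
        = zero_outside {..M} ((ell_mult n (std n I) ^^ (t - 2 * k)) g)"
      using atMost_subset_std[OF I M(1)] by (rule zero_outside_ell_mult_pow[symmetric])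
    also have "\<dots> = 0"
      using Lg by (simp add: zero_outside_def fun_eq_iff)
    finally have "zero_outside {..M} g = 0"
      using box.hard_lefschetz[OF homog] \<open>2 * k < t\<close> by (simp add: M(2))
    then have "zero_outside {..M} g m = 0"
      by simp
    with M(3) \<open>g m \<noteq> 0 m\<close> show False
      by (simp add: zero_outside_def)
  qed
qed

lemma ell_mult_pow_inj_on:
  assumes I: "is_monomial_ideal n I" and lev: "level TYPE('a::field_char_0) n I t" and "2 * k < t"
  shows "inj_on (ell_mult n (std n I) ^^ (t - 2 * k)) (graded_piece n I k :: ((nat \<Rightarrow> nat) \<Rightarrow> 'a) set)"
proof (rule inj_onI)
  fix f g :: "(nat \<Rightarrow> nat) \<Rightarrow> 'a"
  assume f: "f \<in> graded_piece n I k" and g: "g \<in> graded_piece n I k"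
    and "(ell_mult n (std n I) ^^ (t - 2 * k)) f = (ell_mult n (std n I) ^^ (t - 2 * k)) g"
  then have "(ell_mult n (std n I) ^^ (t - 2 * k)) (f - g) = 0"
    by (simp add: ell_mult_pow_diff)
  moreover have "f - g \<in> graded_piece n I k"
    using f g by (simp add: graded_piece_def quot_elems_def)
  ultimately have "f - g = 0"
    using ell_mult_pow_eq_0_imp_eq_0[OF I lev \<open>2 * k < t\<close>] by blast
  then show "f = g"
    by simp
qed

lemma ell_mult_inj_on:
  assumes I: "is_monomial_ideal n I" and lev: "level TYPE('a::field_char_0) n I t" and "2 * k < t"
  shows "inj_on (ell_mult n (std n I)) (graded_piece n I k :: ((nat \<Rightarrow> nat) \<Rightarrow> 'a) set)"
proof -
  have "ell_mult n (std n I) ^^ (t - 2 * k) = ell_mult n (std n I) ^^ (t - Suc (2 * k)) \<circ> ell_mult n (std n I)"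
    using \<open>2 * k < t\<close> by (simp add: Suc_diff_Suc funpow_Suc_right[symmetric])
  then show ?thesis
    using ell_mult_pow_inj_on[OF assms] by (metis inj_on_imageI2)
qed

theorem lemma2p3:
  fixes n t :: nat and I :: "(nat \<Rightarrow> nat) set"
  assumes "is_monomial_ideal n I"
    and "artinian_quot n I"
    and "top_degree TYPE('a::field_char_0) n I t"
    and "level TYPE('a) n I t"
  shows "\<forall>k::nat. 2 * k < t \<longrightarrow>
      inj_on (quot_mult n I (quot_pow n I (sum_vars n I :: (nat \<Rightarrow> nat) \<Rightarrow> 'a) (t - 2 * k)))
             (graded_piece n I k)
    \<and> inj_on (quot_mult n I (sum_vars n I :: (nat \<Rightarrow> nat) \<Rightarrow> 'a)) (graded_piece n I k)"
proof (intro allI impI conjI)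
  fix k :: nat
  assume k: "2 * k < t"
  have fin: "finite (std n I)"
    using assms(2) by (simp add: artinian_quot_def)
  show "inj_on (quot_mult n I (quot_pow n I (sum_vars n I :: (nat \<Rightarrow> nat) \<Rightarrow> 'a) (t - 2 * k)))
      (graded_piece n I k)"
    using ell_mult_pow_inj_on[OF assms(1,4) k]
    by (rule inj_on_cong[THEN iffD2, rotated])
      (simp add: quot_mult_pow_sum_vars[OF assms(1) fin] graded_piece_def)
  show "inj_on (quot_mult n I (sum_vars n I :: (nat \<Rightarrow> nat) \<Rightarrow> 'a)) (graded_piece n I k)"
    using ell_mult_inj_on[OF assms(1,4) k] by (simp add: quot_mult_sum_vars[OF assms(1) fin])
qed

end
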